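(* Let $p\in\{3,4,\dots\}$, $a\ge0$, $b>0$ satisfy either ($a>0$ and $b\in[p/2-1,p/2]$) or ($a=0$ and $b\in[p/2-1,p/2)$). There exists a constant $c\in(0,\infty)$ (possibly depending on $p,a,b$) such that $\frac{w_{k-1}(n)}{w_{k-1}(n+1)}\le c$ for all $n\in\mathbb{Z}^+$ and all $k\in\{1,2,3\}$.
   Context: $\mathbb{Z}^+=\{0,1,2,\dots\}$; $g_0(z)=(a+z)^{-b}$; for $n\in\mathbb{Z}^+$ and $k\in\{0,1,2,3\}$, $w_k(n)=\int_0^\infty\frac{g_0(z)(z/2)^{n+p/2+k-1}e^{-z/2}}{2\Gamma(n+p/2)}dz$. *)

theory Defs
  imports "HOL-Analysis.Analysis"
begin

definition g0 :: "real \<Rightarrow> real \<Rightarrow> real \<Rightarrow> real" where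
  "g0 a b z = (a + z) powr (- b)"

definition w :: "nat \<Rightarrow> real \<Rightarrow> real \<Rightarrow> nat \<Rightarrow> nat \<Rightarrow> real" where
  "w p a b k n =
     (LINT z:{0<..}|lborel.
        g0 a b z * (z / 2) powr (real n + real p / 2 + real k - 1) * exp (- z / 2)
        / (2 * Gamma (real n + real p / 2)))"

end

(*
  Let I(e) be the integral over (0, oo) of (a + z)^(-b) (z/2)^e exp(-z/2). With m = n + p/2 and
  e = m + k - 2 one has w_{k-1}(n) = I(e) / (2 Gamma m) and w_{k-1}(n+1) = I(e+1) / (2 m Gamma m).
  For e + 1 > b the function (a + z)^(-b) (z/2)^(e+1) exp(-z/2) vanishes at both ends of (0, oo), so
  integrating its derivative gives
    (e + 1) I(e) = I(e + 1) + 2b * integral of (a + z)^(-b-1) (z/2)^(e+1) exp(-z/2),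
  and since z/(a + z) <= 1 the last integral is at most I(e)/2; hence (e + 1 - b) I(e) <= I(e + 1).
  For n >= 1 we have m - b >= 1 (as b <= p/2) and e + 1 >= m, so the ratio m I(e) / I(e + 1) is at most
  m / (m - b) <= 1 + b. The ratios at n = 0 are finitely many numbers.
*)

theory Submission
  imports Defs "HOL-Real_Asymp.Real_Asymp"
begin

definition gamma_kernel :: "real \<Rightarrow> real \<Rightarrow> real \<Rightarrow> real \<Rightarrow> real" where
  "gamma_kernel a b e z = g0 a b z * (z / 2) powr e * exp (- z / 2)"

definition gamma_moment :: "real \<Rightarrow> real \<Rightarrow> real \<Rightarrow> real" where
  "gamma_moment a b e = (LINT z:{0<..}|lborel. gamma_kernel a b e z)"

lemma gamma_kernel_measurable [measurable]: "gamma_kernel a b e \<in> borel_measurable borel"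
  unfolding gamma_kernel_def g0_def by measurable

lemma gamma_kernel_nonneg: "0 \<le> gamma_kernel a b e z"
  unfolding gamma_kernel_def g0_def by simp

lemma gamma_kernel_add_one:
  "z \<ge> 0 \<Longrightarrow> gamma_kernel a b (e + 1) z = z / 2 * gamma_kernel a b e z"
  unfolding gamma_kernel_def by (simp add: powr_add)

lemma gamma_moment_nonneg: "0 \<le> gamma_moment a b e"
  unfolding gamma_moment_def set_lebesgue_integral_def
  by (intro Bochner_Integration.integral_nonneg) (simp add: gamma_kernel_nonneg)

lemma gamma_kernel_le:
  assumes "a \<ge> 0" "b \<ge> 0" "z > 0"
  shows "gamma_kernel a b e z \<le> (z / 2) powr (e - b) * exp (- z / 2)"
proof -
  have "(a + z) powr (- b) \<le> z powr (- b)"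
    using assms by (intro powr_mono2') auto
  also have "\<dots> = 2 powr (- b) * (z / 2) powr (- b)"
    by (subst powr_mult[symmetric]) auto
  also have "\<dots> \<le> (z / 2) powr (- b)"
    using assms by (intro mult_left_le_one_le) (auto simp: powr_minus_divide ge_one_powr_ge_zero)
  finally have "(a + z) powr (- b) \<le> (z / 2) powr (- b)" .
  then have "gamma_kernel a b e z \<le> (z / 2) powr (- b) * (z / 2) powr e * exp (- z / 2)"
    unfolding gamma_kernel_def g0_def by (intro mult_right_mono) auto
  also have "\<dots> = (z / 2) powr (e - b) * exp (- z / 2)"
    by (simp add: powr_add[symmetric])
  finally show ?thesis .
qed

lemma gamma_density_integrable:
  fixes s :: real
  assumes "s > 0"
  shows "set_integrable lborel {0<..} (\<lambda>z. (z / 2) powr (s - 1) * exp (- z / 2))"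
proof -
  let ?f = "\<lambda>t. indicator {0..} t * t powr (s - 1) / exp t"
  have "integrable lborel ?f"
  proof (rule integrableI_nonneg)
    show "?f \<in> borel_measurable lborel"
      by (intro borel_measurable_times borel_measurable_divide borel_measurable_indicator) simp_all
    show "AE t in lborel. 0 \<le> ?f t"
      by (intro AE_I2) (simp add: indicator_def)
    show "(\<integral>\<^sup>+t. ennreal (?f t) \<partial>lborel) < \<infinity>"
      unfolding Gamma_conv_nn_integral_real[OF assms, symmetric] by simp
  qed
  then have "integrable lborel (\<lambda>z. ?f (0 + 1/2 * z))"
    by (rule lborel_integrable_real_affine) simp
  also have "(\<lambda>z. ?f (0 + 1/2 * z)) =
      (\<lambda>z. indicator {0..} z * ((z / 2) powr (s - 1) * exp (- z / 2)))"
  proof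
    fix z :: real
    have "indicator {0..} (z / 2) = (indicator {0..} z :: real)"
      by (simp add: indicator_def)
    moreover have "exp (- z / 2) = 1 / exp (z / 2)"
      by (simp add: exp_minus inverse_eq_divide)
    ultimately show "?f (0 + 1/2 * z) = indicator {0..} z * ((z / 2) powr (s - 1) * exp (- z / 2))"
      by simp
  qed
  finally have "set_integrable lborel {0..} (\<lambda>z. (z / 2) powr (s - 1) * exp (- z / 2))"
    by (simp add: set_integrable_def)
  then show ?thesis
    by (rule set_integrable_subset) auto
qed

lemma gamma_kernel_integrable:
  assumes "a \<ge> 0" "b \<ge> 0" "b < e + 1"
  shows "set_integrable lborel {0<..} (gamma_kernel a b e)"
proof (rule set_integrable_bound)
  show "set_integrable lborel {0<..} (\<lambda>z. (z / 2) powr (e - b) * exp (- z / 2))"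
    using gamma_density_integrable[of "e - b + 1"] assms by simp
  show "AE z in lborel. z \<in> {0<..} \<longrightarrow>
          norm (gamma_kernel a b e z) \<le> norm ((z / 2) powr (e - b) * exp (- z / 2))"
  proof (intro AE_I2 impI)
    fix z :: real assume "z \<in> {0<..}"
    then show "norm (gamma_kernel a b e z) \<le> norm ((z / 2) powr (e - b) * exp (- z / 2))"
      using gamma_kernel_le[OF assms(1,2)] gamma_kernel_nonneg[of a b e z] by simp
  qed
qed (simp add: set_borel_measurable_def)

lemma tendsto_gamma_kernel_at_right_0:
  assumes "a \<ge> 0" "b \<ge> 0" "b < e"
  shows "(gamma_kernel a b e \<longlongrightarrow> 0) (at_right 0)"
proof (rule tendsto_sandwich[OF _ _ tendsto_const])
  show "\<forall>\<^sub>F z in at_right 0. 0 \<le> gamma_kernel a b e z"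
    by (simp add: gamma_kernel_nonneg)
  show "\<forall>\<^sub>F z in at_right 0. gamma_kernel a b e z \<le> (z / 2) powr (e - b) * exp (- z / 2)"
    using eventually_at_right_less[of 0] by eventually_elim (use gamma_kernel_le assms in auto)
  have "((\<lambda>z. (z / 2) powr c * exp (- z / 2)) \<longlongrightarrow> 0) (at_right 0)" if "c > 0" for c :: real
    using that by real_asymp
  then show "((\<lambda>z. (z / 2) powr (e - b) * exp (- z / 2)) \<longlongrightarrow> 0) (at_right 0)"
    using assms by simp
qed

lemma tendsto_gamma_kernel_at_top:
  assumes "a \<ge> 0" "b \<ge> 0"
  shows "(gamma_kernel a b e \<longlongrightarrow> 0) at_top"
proof (rule tendsto_sandwich[OF _ _ tendsto_const])
  show "\<forall>\<^sub>F z in at_top. 0 \<le> gamma_kernel a b e z"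
    by (simp add: gamma_kernel_nonneg)
  show "\<forall>\<^sub>F z in at_top. gamma_kernel a b e z \<le> (z / 2) powr (e - b) * exp (- z / 2)"
    using eventually_gt_at_top[of 0] by eventually_elim (use gamma_kernel_le assms in auto)
  have "((\<lambda>z. (z / 2) powr c * exp (- z / 2)) \<longlongrightarrow> 0) at_top" for c :: real
    by real_asymp
  then show "((\<lambda>z. (z / 2) powr (e - b) * exp (- z / 2)) \<longlongrightarrow> 0) at_top" .
qed

lemma has_real_derivative_gamma_kernel:
  assumes "a \<ge> 0" "z > 0"
  shows "(gamma_kernel a b (e + 1) has_real_derivative
           (e + 1) / 2 * gamma_kernel a b e z - gamma_kernel a b (e + 1) z / 2
             - b * (gamma_kernel a b (e + 1) z / (a + z))) (at z)"
proof -
  have az: "a + z > 0"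
    using assms by simp
  have "((\<lambda>z. (a + z) powr (- b) * (z / 2) powr (e + 1) * exp (- z / 2)) has_real_derivative
         (- b) * (a + z) powr (- b - 1) * (z / 2) powr (e + 1) * exp (- z / 2)
         + (a + z) powr (- b) * ((e + 1) * (z / 2) powr e * (1 / 2)) * exp (- z / 2)
         + (a + z) powr (- b) * (z / 2) powr (e + 1) * (exp (- z / 2) * (- 1 / 2))) (at z)"
    using assms az by (auto intro!: derivative_eq_intros simp: field_simps)
  moreover have "(a + z) powr (- b - 1) = (a + z) powr (- b) / (a + z)"
    using az by (simp add: powr_diff)
  moreover have "(z / 2) powr (e + 1) = z / 2 * (z / 2) powr e"
    using assms by (simp add: powr_add)
  ultimately show ?thesis
    unfolding gamma_kernel_def g0_def using az by (simp add: field_simps)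
qed

lemma gamma_kernel_add_one_div_le:
  assumes "a \<ge> 0" "z > 0"
  shows "gamma_kernel a b (e + 1) z / (a + z) \<le> gamma_kernel a b e z / 2"
proof -
  have "gamma_kernel a b (e + 1) z / (a + z) = z / (a + z) * (gamma_kernel a b e z / 2)"
    using assms by (simp add: gamma_kernel_add_one)
  also have "\<dots> \<le> gamma_kernel a b e z / 2"
    using assms by (intro mult_left_le_one_le) (auto simp: gamma_kernel_nonneg)
  finally show ?thesis .
qed

lemma gamma_kernel_add_one_div_integrable:
  assumes "a \<ge> 0" "b \<ge> 0" "b < e + 1"
  shows "set_integrable lborel {0<..} (\<lambda>z. gamma_kernel a b (e + 1) z / (a + z))"
proof (rule set_integrable_bound)
  show "set_integrable lborel {0<..} (\<lambda>z. gamma_kernel a b e z / 2)"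
    using gamma_kernel_integrable[OF assms] by (rule set_integrable_divide)
  show "set_borel_measurable lborel {0<..} (\<lambda>z. gamma_kernel a b (e + 1) z / (a + z))"
    unfolding set_borel_measurable_def by measurable
  show "AE z in lborel. z \<in> {0<..} \<longrightarrow>
          norm (gamma_kernel a b (e + 1) z / (a + z)) \<le> norm (gamma_kernel a b e z / 2)"
    using gamma_kernel_add_one_div_le[OF assms(1)] assms(1)
    by (intro AE_I2) (auto simp: gamma_kernel_nonneg)
qed

lemma gamma_moment_recurrence:
  assumes "a \<ge> 0" "b \<ge> 0" "b < e + 1"
  shows "(e + 1) * gamma_moment a b e =
           gamma_moment a b (e + 1)
             + 2 * b * (LINT z:{0<..}|lborel. gamma_kernel a b (e + 1) z / (a + z))"
proof -
  define Q where "Q z = gamma_kernel a b (e + 1) z / (a + z)" for z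
  define f where
    "f z = (e + 1) / 2 * gamma_kernel a b e z - gamma_kernel a b (e + 1) z / 2 - b * Q z" for z
  have int_e: "set_integrable lborel {0<..} (gamma_kernel a b e)"
    and int_e1: "set_integrable lborel {0<..} (gamma_kernel a b (e + 1))"
    and int_Q: "set_integrable lborel {0<..} Q"
    using assms unfolding Q_def
    by (auto intro: gamma_kernel_integrable gamma_kernel_add_one_div_integrable)
  have "(LBINT z=ereal 0..\<infinity>. f z) = 0 - 0"
  proof (rule interval_integral_FTC_integrable[where F = "gamma_kernel a b (e + 1)"])
    show "(gamma_kernel a b (e + 1) has_vector_derivative f z) (at z)" if "ereal 0 < ereal z" for z
      using has_real_derivative_gamma_kernel[OF assms(1)] that
      by (simp add: f_def Q_def has_real_derivative_iff_has_vector_derivative[symmetric])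
    show "isCont f z" if "ereal 0 < ereal z" for z
      using that assms(1) unfolding f_def Q_def gamma_kernel_def g0_def
      by (auto intro!: continuous_intros)
    show "set_integrable lborel (einterval (ereal 0) \<infinity>) f"
      unfolding f_def using int_e int_e1 int_Q by auto
    show "((gamma_kernel a b (e + 1) \<circ> real_of_ereal) \<longlongrightarrow> 0) (at_right (ereal 0))"
      using tendsto_gamma_kernel_at_right_0[of a b "e + 1"] assms
      by (subst ereal_tendsto_simps1) simp
    show "((gamma_kernel a b (e + 1) \<circ> real_of_ereal) \<longlongrightarrow> 0) (at_left \<infinity>)"
      using tendsto_gamma_kernel_at_top[of a b "e + 1"] assms by (simp add: ereal_tendsto_simps1)
  qed simp
  then have "(LINT z:{0<..}|lborel. f z) = 0"
    by (simp add: interval_lebesgue_integral_def)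
  moreover have "(LINT z:{0<..}|lborel. f z) = (e + 1) / 2 * gamma_moment a b e
      - gamma_moment a b (e + 1) / 2 - b * (LINT z:{0<..}|lborel. Q z)"
    unfolding f_def gamma_moment_def using int_e int_e1 int_Q
    by (simp add: set_integral_diff set_integral_mult_right set_integral_divide_zero)
  ultimately show ?thesis
    unfolding Q_def by (simp add: algebra_simps)
qed

lemma gamma_moment_add_one_ge:
  assumes "a \<ge> 0" "b \<ge> 0" "b < e + 1"
  shows "(e + 1 - b) * gamma_moment a b e \<le> gamma_moment a b (e + 1)"
proof -
  have "(LINT z:{0<..}|lborel. gamma_kernel a b (e + 1) z / (a + z))
          \<le> (LINT z:{0<..}|lborel. gamma_kernel a b e z / 2)"
    using assms gamma_kernel_add_one_div_le[OF assms(1)]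
    by (intro set_integral_mono gamma_kernel_add_one_div_integrable set_integrable_divide
        gamma_kernel_integrable) auto
  also have "\<dots> = gamma_moment a b e / 2"
    unfolding gamma_moment_def by (rule set_integral_divide_zero)
  finally have "2 * b * (LINT z:{0<..}|lborel. gamma_kernel a b (e + 1) z / (a + z))
      \<le> b * gamma_moment a b e"
    using mult_left_mono[OF _ assms(2)] by fastforce
  then show ?thesis
    using gamma_moment_recurrence[OF assms] by (simp add: left_diff_distrib)
qed

lemma w_eq_gamma_moment:
  "w p a b k n =
     gamma_moment a b (real n + real p / 2 + real k - 1) / (2 * Gamma (real n + real p / 2))"
  unfolding w_def gamma_moment_def gamma_kernel_def by simp

lemma w_ratio_le:
  assumes "a \<ge> 0" "b \<ge> 0" "b + 1 \<le> real n + real p / 2"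
  shows "w p a b k n / w p a b k (n + 1) \<le> 1 + b"
proof -
  define m where "m = real n + real p / 2"
  define A where "A = gamma_moment a b (m + k - 1)"
  define B where "B = gamma_moment a b (m + k)"
  have m: "b + 1 \<le> m" "m > 0"
    using assms unfolding m_def by auto
  have "m \<notin> \<int>\<^sub>\<le>\<^sub>0"
    using m by (auto dest: nonpos_Ints_nonpos)
  then have Gamma_m: "Gamma (m + 1) = m * Gamma m" "Gamma m \<noteq> 0"
    by (auto intro: Gamma_plus1 simp: Gamma_eq_zero_iff)
  have w_n: "w p a b k n = A / (2 * Gamma m)"
    unfolding w_eq_gamma_moment A_def m_def ..
  have w_n1: "w p a b k (n + 1) = B / (2 * Gamma (m + 1))"
    unfolding w_eq_gamma_moment B_def m_def by (simp add: algebra_simps)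
  have ratio: "w p a b k n / w p a b k (n + 1) = m * A / B"
    unfolding w_n w_n1 Gamma_m(1) using m Gamma_m(2) by (simp add: field_simps)
  have A: "0 \<le> A" "0 \<le> B"
    unfolding A_def B_def by (rule gamma_moment_nonneg)+
  have "0 \<le> b * (m - b - 1)"
    using assms m by simp
  then have "m \<le> (1 + b) * (m - b)"
    by (simp add: algebra_simps)
  then have "m * A \<le> (1 + b) * (m - b) * A"
    using A(1) by (rule mult_right_mono)
  also have "\<dots> \<le> (1 + b) * (m + k - b) * A"
    using A assms by (intro mult_left_mono mult_right_mono) auto
  also have "\<dots> \<le> (1 + b) * B"
    unfolding mult.assoc using gamma_moment_add_one_ge[of a b "m + k - 1"] assms m
    by (intro mult_left_mono) (auto simp: A_def B_def)
  finally have "m * A \<le> (1 + b) * B" .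
  then show ?thesis
    unfolding ratio using A assms by (cases "B = 0") (auto simp: divide_le_eq mult.commute)
qed

theorem propositionA5:
  fixes p :: nat and a b :: real
  assumes "p \<ge> 3" and "a \<ge> 0" and "b > 0"
    and "(a > 0 \<and> real p / 2 - 1 \<le> b \<and> b \<le> real p / 2) \<or>
         (a = 0 \<and> real p / 2 - 1 \<le> b \<and> b < real p / 2)"
  shows "\<exists>c::real. 0 < c \<and>
           (\<forall>n::nat. \<forall>k::nat. k \<in> {1, 2, 3} \<longrightarrow>
              w p a b (k - 1) n / w p a b (k - 1) (n + 1) \<le> c)"
proof -
  have "b \<le> real p / 2"
    using assms(4) by auto
  define r where "r j = w p a b j 0 / w p a b j 1" for j
  define c where "c = 1 + b + \<bar>r 0\<bar> + \<bar>r 1\<bar> + \<bar>r 2\<bar>"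
  have "w p a b j n / w p a b j (n + 1) \<le> c" if "j \<in> {0, 1, 2}" for n j
  proof (cases "n = 0")
    case True
    have "r j \<le> c"
      using that assms(3) unfolding c_def by auto
    then show ?thesis
      using True unfolding r_def by simp
  next
    case False
    then have "w p a b j n / w p a b j (n + 1) \<le> 1 + b"
      using \<open>b \<le> real p / 2\<close> assms(2,3) by (intro w_ratio_le) auto
    then show ?thesis
      unfolding c_def by simp
  qed
  moreover have "0 < c"
    using assms(3) unfolding c_def by simp
  ultimately show ?thesis
    by (intro exI[of _ c]) force
qed

end
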